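(* Let $\mathbf k=(k_1,\ldots,k_r)\in\mathbb N^r$, $\mathbf x=(x_1,\ldots,x_r)$ with $|x_j|\le1$, $l\in\mathbb N_0$ and $n\in\mathbb N$. Then \[ \sum_{n\ge n_1>\cdots>n_r>0}\prod_{j=1}^r\frac{x_j^{n_j+l}}{(n_j+l)^{k_j}}=(-1)^r\sum_{j=0}^r(-1)^j\,\zeta_{n+l}(k_1,\ldots,k_j;x_1,\ldots,x_j)\,\zeta^\star_l(k_r,k_{r-1},\ldots,k_{j+1};x_r,x_{r-1},\ldots,x_{j+1}). \]
   Context: $\zeta_n(\mathbf k;\mathbf x)=\sum_{n\ge n_1>\cdots>n_r\ge1}\prod_i x_i^{n_i}/n_i^{k_i}$ and $\zeta^\star_n(\mathbf k;\mathbf x)=\sum_{n\ge n_1\ge\cdots\ge n_r\ge1}\prod_i x_i^{n_i}/n_i^{k_i}$ for $n\in\mathbb N_0$; both equal $1$ for the empty index, and a sum over an empty range is $0$ (so e.g. $\zeta^\star_0$ of a nonempty index is $0$). *)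

theory Defs
  imports Complex_Main
begin

definition strict_tuples :: "nat \<Rightarrow> nat \<Rightarrow> nat list set" where
  "strict_tuples n r = {ns. length ns = r \<and> sorted_wrt (>) ns \<and> (\<forall>m\<in>set ns. 1 \<le> m \<and> m \<le> n)}"

definition weak_tuples :: "nat \<Rightarrow> nat \<Rightarrow> nat list set" where
  "weak_tuples n r = {ns. length ns = r \<and> sorted_wrt (\<ge>) ns \<and> (\<forall>m\<in>set ns. 1 \<le> m \<and> m \<le> n)}"

text \<open>Truncated multiple polylogarithm zeta_n(k;x) and its star version.
  ks and xs are assumed to have the same length.\<close>

definition mzeta :: "nat \<Rightarrow> nat list \<Rightarrow> complex list \<Rightarrow> complex" where
  "mzeta n ks xs = (\<Sum>ns\<in>strict_tuples n (length ks).
      \<Prod>i<length ks. xs ! i ^ (ns ! i) / of_nat (ns ! i) ^ (ks ! i))"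

definition mzeta_star :: "nat \<Rightarrow> nat list \<Rightarrow> complex list \<Rightarrow> complex" where
  "mzeta_star n ks xs = (\<Sum>ns\<in>weak_tuples n (length ks).
      \<Prod>i<length ks. xs ! i ^ (ns ! i) / of_nat (ns ! i) ^ (ks ! i))"

end

theory Submission imports Defs begin

text \<open>Both sides are finite sums, so the identity is purely algebraic and holds for arbitrary
  weights \<open>f\<^sub>j\<close> in place of \<open>x\<^sup>m / m\<^sup>k\<close>.
  Split the range \<open>m > l\<close> of the largest index as \<open>{1..n+l} - {1..l}\<close>: the first part
  produces the term with \<open>j\<close> strict indices below \<open>n + l\<close>, and the second part is rewritten by the
  dual identity expressing a weakly ascending sum with indices in \<open>(M, l]\<close> as an alternating sum
  of products of descending sums up to \<open>M\<close> and weakly ascending sums over \<open>[1, l]\<close>.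
  Both identities follow by induction on the length of the index.\<close>

definition prod_at :: "(nat \<Rightarrow> 'a::comm_monoid_mult) list \<Rightarrow> nat list \<Rightarrow> 'a" where
  "prod_at fs ns = (\<Prod>i<length fs. (fs ! i) (ns ! i))"

fun desc_sum :: "nat \<Rightarrow> (nat \<Rightarrow> 'a::comm_semiring_1) list \<Rightarrow> 'a" where
  "desc_sum N [] = 1"
| "desc_sum N (f # fs) = (\<Sum>m=1..N. f m * desc_sum (m - 1) fs)"

fun asc_sum :: "nat \<Rightarrow> nat \<Rightarrow> (nat \<Rightarrow> 'a::comm_semiring_1) list \<Rightarrow> 'a" where
  "asc_sum lo l [] = 1"
| "asc_sum lo l (g # gs) = (\<Sum>p=lo..l. g p * asc_sum p l gs)"

definition asc_tuples :: "nat \<Rightarrow> nat \<Rightarrow> nat \<Rightarrow> nat list set" where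
  "asc_tuples lo l r = {ns. length ns = r \<and> sorted ns \<and> (\<forall>m\<in>set ns. lo \<le> m \<and> m \<le> l)}"

lemma prod_at_Cons: "prod_at (f # fs) (m # ns) = f m * prod_at fs ns"
  unfolding prod_at_def length_Cons prod.lessThan_Suc_shift by simp

lemma finite_strict_tuples: "finite (strict_tuples N r)"
proof (rule finite_subset)
  show "strict_tuples N r \<subseteq> {ns. set ns \<subseteq> {..N} \<and> length ns = r}"
    unfolding strict_tuples_def by auto
qed (simp add: finite_lists_length_eq)

lemma finite_asc_tuples: "finite (asc_tuples lo l r)"
proof (rule finite_subset)
  show "asc_tuples lo l r \<subseteq> {ns. set ns \<subseteq> {..l} \<and> length ns = r}"
    unfolding asc_tuples_def by auto
qed (simp add: finite_lists_length_eq)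

lemma strict_tuples_Suc:
  "strict_tuples N (Suc r) = (\<lambda>(m, ns). m # ns) ` (SIGMA m:{1..N}. strict_tuples (m - 1) r)"
proof (rule set_eqI)
  fix ns
  show "ns \<in> strict_tuples N (Suc r) \<longleftrightarrow>
        ns \<in> (\<lambda>(m, ns). m # ns) ` (SIGMA m:{1..N}. strict_tuples (m - 1) r)"
    by (cases ns) (auto simp: strict_tuples_def image_iff)
qed

lemma asc_tuples_Suc:
  "asc_tuples lo l (Suc r) = (\<lambda>(m, ns). m # ns) ` (SIGMA m:{lo..l}. asc_tuples m l r)"
proof (rule set_eqI)
  fix ns
  show "ns \<in> asc_tuples lo l (Suc r) \<longleftrightarrow>
        ns \<in> (\<lambda>(m, ns). m # ns) ` (SIGMA m:{lo..l}. asc_tuples m l r)"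
    by (cases ns) (auto simp: asc_tuples_def image_iff)
qed

lemma desc_sum_eq_sum_strict_tuples:
  "desc_sum N fs = (\<Sum>ns\<in>strict_tuples N (length fs). prod_at fs ns)"
proof (induction fs arbitrary: N)
  case Nil
  have "strict_tuples N 0 = {[]}" by (auto simp: strict_tuples_def)
  then show ?case by (simp add: prod_at_def)
next
  case (Cons f fs)
  have inj: "inj_on (\<lambda>(m, ns). m # ns) (SIGMA m:{1..N}. strict_tuples (m - 1) (length fs))"
    by (auto simp: inj_on_def)
  have "(\<Sum>ns\<in>strict_tuples N (length (f # fs)). prod_at (f # fs) ns)
      = (\<Sum>(m, ns)\<in>(SIGMA m:{1..N}. strict_tuples (m - 1) (length fs)). f m * prod_at fs ns)"
    unfolding length_Cons strict_tuples_Suc sum.reindex[OF inj]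
    by (simp add: case_prod_unfold prod_at_Cons)
  also have "\<dots> = (\<Sum>m=1..N. f m * desc_sum (m - 1) fs)"
    by (simp add: sum.Sigma[symmetric] finite_strict_tuples Cons.IH sum_distrib_left)
  finally show ?case by simp
qed

lemma asc_sum_eq_sum_asc_tuples:
  "asc_sum lo l gs = (\<Sum>ns\<in>asc_tuples lo l (length gs). prod_at gs ns)"
proof (induction gs arbitrary: lo)
  case Nil
  have "asc_tuples lo l 0 = {[]}" by (auto simp: asc_tuples_def)
  then show ?case by (simp add: prod_at_def)
next
  case (Cons g gs)
  have inj: "inj_on (\<lambda>(m, ns). m # ns) (SIGMA m:{lo..l}. asc_tuples m l (length gs))"
    by (auto simp: inj_on_def)
  have "(\<Sum>ns\<in>asc_tuples lo l (length (g # gs)). prod_at (g # gs) ns)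
      = (\<Sum>(m, ns)\<in>(SIGMA m:{lo..l}. asc_tuples m l (length gs)). g m * prod_at gs ns)"
    unfolding length_Cons asc_tuples_Suc sum.reindex[OF inj]
    by (simp add: case_prod_unfold prod_at_Cons)
  also have "\<dots> = (\<Sum>m=lo..l. g m * asc_sum m l gs)"
    by (simp add: sum.Sigma[symmetric] finite_asc_tuples Cons.IH sum_distrib_left)
  finally show ?case by simp
qed

definition alt_sum :: "nat \<Rightarrow> ((nat \<Rightarrow> 'a::comm_ring_1) list \<Rightarrow> 'a) \<Rightarrow> (nat \<Rightarrow> 'a) list \<Rightarrow> 'a"
  where "alt_sum M W fs =
    (\<Sum>j=0..length fs. (-1) ^ j * desc_sum M (take j fs) * W (drop j fs))"

lemma alt_sum_Cons:
  "alt_sum M W (g # gs) = W (g # gs) - (\<Sum>p=1..M. g p * alt_sum (p - 1) W gs)"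
proof -
  have "alt_sum M W (g # gs) = W (g # gs) +
      (\<Sum>j=0..length gs. (-1) ^ Suc j * desc_sum M (g # take j gs) * W (drop j gs))"
    unfolding alt_sum_def
    by (simp add: sum.atLeast0_atMost_Suc_shift del: sum.cl_ivl_Suc)
  also have "(\<Sum>j=0..length gs. (-1) ^ Suc j * desc_sum M (g # take j gs) * W (drop j gs))
      = - (\<Sum>j=0..length gs. \<Sum>p=1..M.
              g p * ((-1) ^ j * desc_sum (p - 1) (take j gs) * W (drop j gs)))"
    by (simp add: sum_distrib_left sum_distrib_right sum_negf algebra_simps)
  also have "\<dots> = - (\<Sum>p=1..M. g p * alt_sum (p - 1) W gs)"
    unfolding alt_sum_def by (subst sum.swap) (simp add: sum_distrib_left)
  finally show ?thesis by simp
qed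

lemma sum_atLeastAtMost_split_nat:
  fixes h :: "nat \<Rightarrow> 'a::comm_monoid_add"
  assumes "M \<le> l"
  shows "(\<Sum>p=1..l. h p) = (\<Sum>p=1..M. h p) + (\<Sum>p=Suc M..l. h p)"
proof -
  have "{1..l} = {1..M} \<union> {Suc M..l}" using assms by auto
  then show ?thesis by (simp add: sum.union_disjoint)
qed

lemma asc_sum_Suc_eq_alt_sum:
  "M \<le> l \<Longrightarrow> asc_sum (Suc M) l gs = alt_sum M (asc_sum 1 l) gs"
proof (induction gs arbitrary: M)
  case Nil
  then show ?case by (simp add: alt_sum_def)
next
  case (Cons g gs)
  define h where "h p = g p * alt_sum (p - 1) (asc_sum 1 l) gs" for p
  have asc_sum_gs: "asc_sum p l gs = alt_sum (p - 1) (asc_sum 1 l) gs" if "1 \<le> p" "p \<le> l" for p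
    using Cons.IH[of "p - 1"] that by simp
  have "asc_sum (Suc M) l (g # gs) = (\<Sum>p=Suc M..l. h p)"
    unfolding asc_sum.simps h_def by (rule sum.cong) (auto simp: asc_sum_gs)
  moreover have "asc_sum 1 l (g # gs) = (\<Sum>p=1..l. h p)"
    unfolding asc_sum.simps h_def by (rule sum.cong) (auto simp: asc_sum_gs)
  ultimately show ?case
    using sum_atLeastAtMost_split_nat[OF Cons.prems, of h] by (simp add: alt_sum_Cons h_def)
qed

lemma desc_sum_shift_eq_alt_sum:
  "desc_sum N (map (\<lambda>f m. f (m + l)) fs) = (-1) ^ length fs * alt_sum (N + l) (asc_sum 1 l) fs"
proof (induction fs arbitrary: N)
  case Nil
  then show ?case by (simp add: alt_sum_def)
next
  case (Cons f fs)
  define h where "h p = f p * alt_sum (p - 1) (asc_sum 1 l) fs" for p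
  have "desc_sum N (map (\<lambda>f m. f (m + l)) (f # fs)) = (-1) ^ length fs * (\<Sum>m=1..N. h (m + l))"
    by (simp add: Cons.IH h_def sum_distrib_left algebra_simps)
  also have "(\<Sum>m=1..N. h (m + l)) = (\<Sum>p=Suc l..N + l. h p)"
    using sum.shift_bounds_cl_nat_ivl[of h 1 l N] by simp
  also have "\<dots> = (\<Sum>p=1..N + l. h p) - asc_sum 1 l (f # fs)"
  proof -
    have "asc_sum p l fs = alt_sum (p - 1) (asc_sum 1 l) fs" if "1 \<le> p" "p \<le> l" for p
      using asc_sum_Suc_eq_alt_sum[of "p - 1" l fs] that by simp
    then have "asc_sum 1 l (f # fs) = (\<Sum>p=1..l. h p)"
      unfolding asc_sum.simps h_def by (intro sum.cong) auto
    then show ?thesis using sum_atLeastAtMost_split_nat[of l "N + l" h] by simp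
  qed
  finally show ?case by (simp add: alt_sum_Cons h_def algebra_simps)
qed

definition polylog_weights :: "nat list \<Rightarrow> complex list \<Rightarrow> (nat \<Rightarrow> complex) list" where
  "polylog_weights ks xs = map (\<lambda>(k, x) m. x ^ m / of_nat m ^ k) (zip ks xs)"

lemma mzeta_eq_desc_sum:
  "length xs = length ks \<Longrightarrow> mzeta N ks xs = desc_sum N (polylog_weights ks xs)"
  unfolding mzeta_def desc_sum_eq_sum_strict_tuples prod_at_def
  by (auto simp: polylog_weights_def intro!: sum.cong prod.cong)

lemma weak_tuples_eq_rev_asc_tuples: "weak_tuples l r = rev ` asc_tuples 1 l r"
proof (rule set_eqI)
  fix ns
  have "ns \<in> rev ` asc_tuples 1 l r \<longleftrightarrow> rev ns \<in> asc_tuples 1 l r"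
    by (metis image_iff rev_rev_ident)
  then show "ns \<in> weak_tuples l r \<longleftrightarrow> ns \<in> rev ` asc_tuples 1 l r"
    by (simp add: weak_tuples_def asc_tuples_def sorted_wrt_rev)
qed

lemma mzeta_star_rev_eq_asc_sum:
  assumes "length xs = length ks"
  shows "mzeta_star l (rev ks) (rev xs) = asc_sum 1 l (polylog_weights ks xs)"
proof -
  let ?t = "\<lambda>ms i. xs ! i ^ (ms ! i) / of_nat (ms ! i) ^ (ks ! i)"
  have "mzeta_star l (rev ks) (rev xs) = (\<Sum>ms\<in>asc_tuples 1 l (length ks).
      \<Prod>i<length ks. rev xs ! i ^ (rev ms ! i) / of_nat (rev ms ! i) ^ (rev ks ! i))"
    unfolding mzeta_star_def weak_tuples_eq_rev_asc_tuples length_rev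
    by (subst sum.reindex) (auto intro: inj_onI)
  also have "\<dots> = (\<Sum>ms\<in>asc_tuples 1 l (length ks). \<Prod>i<length ks. ?t ms i)"
  proof (rule sum.cong[OF refl])
    fix ms assume "ms \<in> asc_tuples 1 l (length ks)"
    then have "length ms = length ks" by (simp add: asc_tuples_def)
    then have "(\<Prod>i<length ks. rev xs ! i ^ (rev ms ! i) / of_nat (rev ms ! i) ^ (rev ks ! i))
        = (\<Prod>i<length ks. ?t ms (length ks - Suc i))"
      using assms by (intro prod.cong refl) (simp add: rev_nth)
    also have "\<dots> = (\<Prod>i<length ks. ?t ms i)"
      by (rule prod.reindex_bij_witness[of _ "\<lambda>i. length ks - Suc i" "\<lambda>i. length ks - Suc i"])
        auto
    finally show "(\<Prod>i<length ks. rev xs ! i ^ (rev ms ! i) / of_nat (rev ms ! i) ^ (rev ks ! i))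
        = (\<Prod>i<length ks. ?t ms i)" .
  qed
  also have "\<dots> = asc_sum 1 l (polylog_weights ks xs)"
    unfolding asc_sum_eq_sum_asc_tuples prod_at_def using assms
    by (auto simp: polylog_weights_def intro!: sum.cong prod.cong)
  finally show ?thesis .
qed

theorem mainTheorem12:
  fixes ks :: "nat list" and xs :: "complex list" and l n :: nat
  assumes "length xs = length ks"
    and "\<forall>k\<in>set ks. k \<ge> 1"
    and "\<forall>x\<in>set xs. norm x \<le> 1"
    and "n \<ge> 1"
  shows "(\<Sum>ns\<in>strict_tuples n (length ks).
            \<Prod>j<length ks. xs ! j ^ (ns ! j + l) / of_nat (ns ! j + l) ^ (ks ! j))
       = (-1) ^ length ks * (\<Sum>j=0..length ks. (-1) ^ j *
            mzeta (n + l) (take j ks) (take j xs) *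
            mzeta_star l (rev (drop j ks)) (rev (drop j xs)))"
proof -
  define F where "F = polylog_weights ks xs"
  have length_F: "length F = length ks"
    using assms(1) by (simp add: F_def polylog_weights_def)
  have "(\<Sum>ns\<in>strict_tuples n (length ks).
            \<Prod>j<length ks. xs ! j ^ (ns ! j + l) / of_nat (ns ! j + l) ^ (ks ! j))
      = desc_sum n (map (\<lambda>f m. f (m + l)) F)"
    unfolding desc_sum_eq_sum_strict_tuples prod_at_def using assms(1)
    by (auto simp: F_def polylog_weights_def intro!: sum.cong prod.cong)
  also have "\<dots> = (-1) ^ length F * alt_sum (n + l) (asc_sum 1 l) F"
    by (rule desc_sum_shift_eq_alt_sum)
  also have "\<dots> = (-1) ^ length ks * (\<Sum>j=0..length ks. (-1) ^ j *
            mzeta (n + l) (take j ks) (take j xs) *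
            mzeta_star l (rev (drop j ks)) (rev (drop j xs)))"
    unfolding alt_sum_def length_F using assms(1)
    by (auto simp: F_def mzeta_eq_desc_sum mzeta_star_rev_eq_asc_sum polylog_weights_def
        take_map drop_map take_zip drop_zip intro!: sum.cong)
  finally show ?thesis .
qed

end
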